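(* For $i=1,\dots,n$ let $X_i=\{0,\dots,m_i-1\}$ and let $P_i$ be an irreducible stochastic matrix on $X_i$ in detailed balance with a strictly positive probability measure $\sigma_i$, where $\sigma_i$ is uniform for every $i\ge2$. Let $p^0_1,\dots,p^0_n>0$ sum to $1$ and $P=\sum_{i=1}^np^0_i(I_1\otimes\cdots\otimes I_{i-1}\otimes P_i\otimes J_{i+1}\otimes\cdots\otimes J_n)$. For each $i$ let $U_i$ be real, $\Delta_i$ real diagonal and $D_i=\mathrm{diag}(\sigma_i(0),\dots,\sigma_i(m_i-1))$ with $P_iU_i=U_i\Delta_i$, $U_i^TD_iU_i=I$, the column of $U_i$ indexed by $0$ equal to the all-ones vector and $(\Delta_i)_{00}=1$. Set $$U=U_1\otimes A_2\otimes\cdots\otimes A_n+\sum_{k=2}^nI_1^{\sigma_1\text{-norm}}\otimes\cdots\otimes I_{k-1}^{\sigma_{k-1}\text{-norm}}\otimes(U_k-A_k)\otimes A_{k+1}\otimes\cdots\otimes A_n,$$ $$D=\bigotimes_{i=1}^nD_i,\qquad \Delta=\sum_{i=1}^np^0_i(I_1\otimes\cdots\otimes I_{i-1}\otimes\Delta_i\otimes J^{\mathrm{diag}}_{i+1}\otimes\cdots\otimes J^{\mathrm{diag}}_n).$$ Then $PU=U\Delta$ and $U^TDU=I$.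
   Context: $I_i$ is the $m_i\times m_i$ identity, $J_i$ the $m_i\times m_i$ matrix with all entries $1/m_i$, $I_i^{\sigma_i\text{-norm}}=\mathrm{diag}(\sigma_i(0)^{-1/2},\dots,\sigma_i(m_i-1)^{-1/2})$, $A_i$ the $m_i\times m_i$ matrix whose column $0$ consists of ones and all other entries are $0$, and $J^{\mathrm{diag}}_i=\mathrm{diag}(1,0,\dots,0)$. Kronecker products are indexed lexicographically: $(A\otimes B)_{(x,x'),(y,y')}=A_{x,y}B_{x',y'}$. *)

theory Defs
  imports Complex_Main "HOL-Library.FuncSet"
begin

text \<open>Factor matrices are
functions nat \<Rightarrow> nat \<Rightarrow> real, only entries with indices < m i matter.
The product space X_1 \<times> ... \<times> X_n is represented by the extensional function
space PiE {1..n} (\<lambda>i. {..<m i}); a matrix on it is a function on pairs of points.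
The Kronecker product of factors F_1,...,F_n is the matrix
(x,y) \<mapsto> prod_i F_i (x i) (y i), which is the lexicographic Kronecker product
up to the canonical identification of indices.\<close>

type_synonym fmat = "nat \<Rightarrow> nat \<Rightarrow> real"
type_synonym pmat = "(nat \<Rightarrow> nat) \<Rightarrow> (nat \<Rightarrow> nat) \<Rightarrow> real"

definition fmul :: "nat \<Rightarrow> fmat \<Rightarrow> fmat \<Rightarrow> fmat" where
  "fmul m A B = (\<lambda>a c. \<Sum>b<m. A a b * B b c)"

definition fid :: fmat where
  "fid = (\<lambda>a b. if a = b then 1 else 0)"

primrec fpow :: "nat \<Rightarrow> fmat \<Rightarrow> nat \<Rightarrow> fmat" where
  "fpow m A 0 = fid"
| "fpow m A (Suc k) = fmul m (fpow m A k) A"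

definition ftrans :: "fmat \<Rightarrow> fmat" where
  "ftrans A = (\<lambda>a b. A b a)"

definition fdiag :: "(nat \<Rightarrow> real) \<Rightarrow> fmat" where
  "fdiag d = (\<lambda>a b. if a = b then d a else 0)"

definition stochastic :: "nat \<Rightarrow> fmat \<Rightarrow> bool" where
  "stochastic m P \<longleftrightarrow> (\<forall>a<m. \<forall>b<m. P a b \<ge> 0) \<and> (\<forall>a<m. (\<Sum>b<m. P a b) = 1)"

definition irreducible_mat :: "nat \<Rightarrow> fmat \<Rightarrow> bool" where
  "irreducible_mat m P \<longleftrightarrow> (\<forall>a<m. \<forall>b<m. \<exists>k. fpow m P k a b > 0)"

definition detailed_balance :: "nat \<Rightarrow> fmat \<Rightarrow> (nat \<Rightarrow> real) \<Rightarrow> bool" where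
  "detailed_balance m P \<sigma> \<longleftrightarrow> (\<forall>a<m. \<forall>b<m. \<sigma> a * P a b = \<sigma> b * P b a)"

definition pos_prob :: "nat \<Rightarrow> (nat \<Rightarrow> real) \<Rightarrow> bool" where
  "pos_prob m \<sigma> \<longleftrightarrow> (\<forall>a<m. \<sigma> a > 0) \<and> (\<Sum>a<m. \<sigma> a) = 1"

definition feq :: "nat \<Rightarrow> fmat \<Rightarrow> fmat \<Rightarrow> bool" where
  "feq m A B \<longleftrightarrow> (\<forall>a<m. \<forall>b<m. A a b = B a b)"

definition Jmat :: "nat \<Rightarrow> fmat" where
  "Jmat m = (\<lambda>a b. 1 / real m)"

definition Amat :: fmat where
  "Amat = (\<lambda>a b. if b = 0 then 1 else 0)"

definition Jdiag :: fmat where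
  "Jdiag = (\<lambda>a b. if a = 0 \<and> b = 0 then 1 else 0)"

definition Inorm :: "(nat \<Rightarrow> real) \<Rightarrow> fmat" where
  "Inorm \<sigma> = (\<lambda>a b. if a = b then \<sigma> a powr (-1/2) else 0)"

definition pspace :: "nat \<Rightarrow> (nat \<Rightarrow> nat) \<Rightarrow> (nat \<Rightarrow> nat) set" where
  "pspace n m = PiE {1..n} (\<lambda>i. {..<m i})"

definition kron :: "nat \<Rightarrow> (nat \<Rightarrow> fmat) \<Rightarrow> pmat" where
  "kron n F = (\<lambda>x y. \<Prod>i\<in>{1..n}. F i (x i) (y i))"

definition pmul :: "nat \<Rightarrow> (nat \<Rightarrow> nat) \<Rightarrow> pmat \<Rightarrow> pmat \<Rightarrow> pmat" where
  "pmul n m A B = (\<lambda>x z. \<Sum>y\<in>pspace n m. A x y * B y z)"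

definition ptrans :: "pmat \<Rightarrow> pmat" where
  "ptrans A = (\<lambda>x y. A y x)"

definition pid :: pmat where
  "pid = (\<lambda>x y. if x = y then 1 else 0)"

definition peq :: "nat \<Rightarrow> (nat \<Rightarrow> nat) \<Rightarrow> pmat \<Rightarrow> pmat \<Rightarrow> bool" where
  "peq n m A B \<longleftrightarrow> (\<forall>x\<in>pspace n m. \<forall>y\<in>pspace n m. A x y = B x y)"

end

theory Submission
  imports Defs
begin

text \<open>Write U as the sum of the Kronecker products T_k = kron (U_term k), k = 1..n, and P, \<Delta> as
the weighted sums of K_i = kron (P_term i), E_i = kron (Delta_term i). By the mixed-product rule
all products of Kronecker products are computed factorwise. For k \<ge> 2 the columns of U_k - A
are orthogonal to the constants, because \<sigma>_k is uniform, so they are annihilated by J and Jdiag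
alike. Hence K_i T_k = T_k E_i = 0 for i < k, while for i \<ge> k the two products agree factor by
factor; this gives PU = U\<Delta> whatever the weights. For the Gram matrix, T_k^T D T_l = 0 for k \<noteq> l,
and T_k^T D T_k = Q_k - Q_(k-1) (just Q_1 for k = 1), where Q_N = partial_id N has N identity
factors followed by Jdiag's; the sum telescopes to Q_n = I.\<close>

lemma pmul_kron:
  "pmul n m (kron n F) (kron n G) x z = kron n (\<lambda>j. fmul (m j) (F j) (G j)) x z"
proof -
  have "kron n (\<lambda>j. fmul (m j) (F j) (G j)) x z
      = (\<Prod>j\<in>{1..n}. \<Sum>b\<in>{..<m j}. F j (x j) b * G j b (z j))"
    by (simp add: kron_def fmul_def)
  also have "\<dots> = (\<Sum>y\<in>pspace n m. \<Prod>j\<in>{1..n}. F j (x j) (y j) * G j (y j) (z j))"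
    unfolding pspace_def by (rule prod_sum_PiE) auto
  also have "\<dots> = pmul n m (kron n F) (kron n G) x z"
    by (simp add: pmul_def kron_def prod.distrib)
  finally show ?thesis by simp
qed

lemma pspace_lessD: "x \<in> pspace n m \<Longrightarrow> j \<in> {1..n} \<Longrightarrow> x j < m j"
  by (auto simp: pspace_def PiE_def Pi_def)

lemma kron_cong_feq:
  assumes "\<And>j. j \<in> {1..n} \<Longrightarrow> feq (m j) (F j) (G j)" "x \<in> pspace n m" "y \<in> pspace n m"
  shows "kron n F x y = kron n G x y"
  unfolding kron_def
  using assms by (intro prod.cong) (auto simp: feq_def pspace_lessD)

lemma kron_cong: "(\<And>j. j \<in> {1..n} \<Longrightarrow> F j = G j) \<Longrightarrow> kron n F x y = kron n G x y"
  unfolding kron_def by (intro prod.cong) auto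

lemma kron_eq_0:
  assumes "k \<in> {1..n}" "F k (x k) (y k) = 0"
  shows "kron n F x y = 0"
  unfolding kron_def using assms by (intro prod_zero) auto

lemma kron_fun_upd_diff:
  assumes "k \<in> {1..n}"
  shows "kron n (F(k := (\<lambda>a b. A a b - B a b))) x y
       = kron n (F(k := A)) x y - kron n (F(k := B)) x y"
proof -
  have split: "kron n H x y = H k (x k) (y k) * (\<Prod>j\<in>{1..n}-{k}. H j (x j) (y j))" for H
    unfolding kron_def using prod.remove[OF _ assms] by simp
  have "(\<Prod>j\<in>{1..n}-{k}. (F(k := C)) j (x j) (y j)) = (\<Prod>j\<in>{1..n}-{k}. F j (x j) (y j))" for C
    by (rule prod.cong) auto
  then show ?thesis by (simp add: split algebra_simps)
qed

lemma kron_diag_eq_pid: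
  assumes "x \<in> pspace n m" "y \<in> pspace n m"
  shows "kron n (\<lambda>_. fid) x y = pid x y"
proof (cases "x = y")
  case False
  then obtain j where j: "x j \<noteq> y j" by auto
  have "j \<in> {1..n}"
  proof (rule ccontr)
    assume "j \<notin> {1..n}"
    with assms have "x j = undefined" "y j = undefined"
      by (auto simp: pspace_def PiE_def extensional_def)
    with j show False by simp
  qed
  with j False show ?thesis by (simp add: kron_eq_0[of j] fid_def pid_def)
qed (simp add: kron_def fid_def pid_def)

lemma pmul_sum_left:
  "pmul n m (\<lambda>x y. \<Sum>i\<in>I. f i x y) B = (\<lambda>x z. \<Sum>i\<in>I. pmul n m (f i) B x z)"
  unfolding pmul_def by (intro ext) (simp add: sum_distrib_right, rule sum.swap)

lemma pmul_sum_right: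
  "pmul n m A (\<lambda>x y. \<Sum>i\<in>I. f i x y) = (\<lambda>x z. \<Sum>i\<in>I. pmul n m A (f i) x z)"
  unfolding pmul_def by (intro ext) (simp add: sum_distrib_left, rule sum.swap)

lemma pmul_scale_left: "pmul n m (\<lambda>x y. c * A x y) B x z = c * pmul n m A B x z"
  unfolding pmul_def by (simp add: sum_distrib_left mult.assoc)

lemma pmul_scale_right: "pmul n m A (\<lambda>x y. c * B x y) x z = c * pmul n m A B x z"
  unfolding pmul_def by (simp add: sum_distrib_left algebra_simps)

lemma fmul_fid_left: "a < m \<Longrightarrow> fmul m fid X a c = X a c"
  unfolding fmul_def fid_def by (simp add: if_distrib[of "\<lambda>v. v * _"] cong: if_cong)

lemma fmul_fid_right: "c < m \<Longrightarrow> fmul m X fid a c = X a c"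
  unfolding fmul_def fid_def by (simp add: if_distrib[of "\<lambda>v. _ * v"] cong: if_cong)

lemma fmul_diff_left: "fmul m (\<lambda>a b. Y a b - Z a b) X a c = fmul m Y X a c - fmul m Z X a c"
  by (simp add: fmul_def algebra_simps sum_subtractf)

lemma fmul_diff_right: "fmul m X (\<lambda>a b. Y a b - Z a b) a c = fmul m X Y a c - fmul m X Z a c"
  by (simp add: fmul_def algebra_simps sum_subtractf)

lemma gram_eq: "fmul m (fmul m (ftrans X) (fdiag s)) Y a c = (\<Sum>b<m. X b a * s b * Y b c)"
proof -
  have "b < m \<Longrightarrow> fmul m (ftrans X) (fdiag s) a b = X b a * s b" for b
    by (simp add: fmul_def ftrans_def fdiag_def if_distrib cong: if_cong)
  then show ?thesis by (simp add: fmul_def)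
qed

lemma stochastic_fmul_Amat: "stochastic m P \<Longrightarrow> a < m \<Longrightarrow> fmul m P Amat a c = Amat a c"
  by (simp add: fmul_def Amat_def stochastic_def)

lemma fmul_Jmat_Amat: "0 < m \<Longrightarrow> fmul m (Jmat m) Amat a c = Amat a c"
  by (simp add: fmul_def Amat_def Jmat_def)

lemma fmul_Amat_Jdiag: "0 < m \<Longrightarrow> fmul m Amat Jdiag a c = Amat a c"
proof -
  have "fmul m Amat Jdiag a c = (\<Sum>b<m. if b = 0 then Amat a c else 0)"
    unfolding fmul_def by (intro sum.cong) (auto simp: Amat_def Jdiag_def)
  then show "0 < m \<Longrightarrow> ?thesis" by simp
qed

lemma fmul_Amat_left:
  assumes "0 < m" "c < m" "\<Delta> 0 0 = 1" "\<And>b. b < m \<Longrightarrow> b \<noteq> 0 \<Longrightarrow> \<Delta> 0 b = 0"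
  shows "fmul m Amat \<Delta> a c = Amat a c"
proof -
  have "fmul m Amat \<Delta> a c = (\<Sum>b<m. if b = 0 then \<Delta> 0 c else 0)"
    unfolding fmul_def by (intro sum.cong) (auto simp: Amat_def)
  with assms show ?thesis by (cases "c = 0") (auto simp: Amat_def)
qed

lemma fmul_Jmat_centered:
  assumes "\<And>a. a < m \<Longrightarrow> U a 0 = 1" "c < m" "c \<noteq> 0 \<Longrightarrow> (\<Sum>b<m. U b c) = 0"
  shows "fmul m (Jmat m) (\<lambda>a b. U a b - Amat a b) a c = 0"
proof (cases "c = 0")
  case False
  then have "fmul m (Jmat m) (\<lambda>a b. U a b - Amat a b) a c = (\<Sum>b<m. U b c) / real m"
    by (simp add: fmul_def Amat_def Jmat_def sum_divide_distrib)
  with False assms(3) show ?thesis by simp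
qed (use assms(1) in \<open>simp add: fmul_def Amat_def\<close>)

lemma fmul_centered_Jdiag:
  assumes "0 < m" "U a 0 = 1"
  shows "fmul m (\<lambda>a b. U a b - Amat a b) Jdiag a c = 0"
proof -
  have "fmul m (\<lambda>a b. U a b - Amat a b) Jdiag a c
      = (\<Sum>b<m. if b = 0 then (if c = 0 then U a 0 - 1 else 0) else 0)"
    unfolding fmul_def by (intro sum.cong) (auto simp: Jdiag_def Amat_def)
  with assms show ?thesis by simp
qed

lemma gram_Inorm:
  assumes "a < m" "c < m" "s a > 0"
  shows "(\<Sum>b<m. Inorm s b a * s b * Inorm s b c) = fid a c"
proof -
  have "s a powr (-1/2) * s a * s a powr (-1/2) = s a powr (-1/2 + -1/2) * s a"
    by (simp only: powr_add mult_ac)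
  also have "\<dots> = 1" using assms(3) by (simp add: powr_minus)
  finally have "s a powr (-1/2) * s a * s a powr (-1/2) = 1" .
  moreover have "(\<Sum>b<m. Inorm s b a * s b * Inorm s b c)
      = (\<Sum>b<m. if b = a then (if a = c then s a powr (-1/2) * s a * s a powr (-1/2) else 0) else 0)"
    by (intro sum.cong) (auto simp: Inorm_def)
  ultimately show ?thesis using assms(1) by (cases "a = c") (simp_all add: fid_def)
qed

lemma gram_Amat:
  "(\<Sum>b<m. s b) = 1 \<Longrightarrow> (\<Sum>b<m. Amat b a * s b * Amat b c) = Jdiag a c"
  by (cases "a = 0"; cases "c = 0") (simp_all add: Amat_def Jdiag_def)

lemma gram_Amat_centered:
  assumes "c < m" "(\<Sum>b<m. s b * U b c) = fid 0 c" "(\<Sum>b<m. s b) = 1"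
  shows "(\<Sum>b<m. Amat b a * s b * (U b c - Amat b c)) = 0"
proof -
  have "(\<Sum>b<m. Amat b a * s b * (U b c - Amat b c))
      = (if a = 0 then (\<Sum>b<m. s b * U b c) - (if c = 0 then (\<Sum>b<m. s b) else 0) else 0)"
    by (auto simp: Amat_def algebra_simps sum_subtractf)
  with assms show ?thesis by (simp add: fid_def)
qed

lemma gram_centered_Amat:
  assumes "a < m" "(\<Sum>b<m. s b * U b a) = fid 0 a" "(\<Sum>b<m. s b) = 1"
  shows "(\<Sum>b<m. (U b a - Amat b a) * s b * Amat b c) = 0"
proof -
  have "(\<Sum>b<m. (U b a - Amat b a) * s b * Amat b c)
      = (if c = 0 then (\<Sum>b<m. s b * U b a) - (if a = 0 then (\<Sum>b<m. s b) else 0) else 0)"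
    by (auto simp: Amat_def algebra_simps sum_subtractf)
  with assms show ?thesis by (simp add: fid_def)
qed

lemma gram_centered:
  assumes "a < m" "c < m" "(\<Sum>b<m. U b a * s b * U b c) = fid a c"
    "\<And>c. c < m \<Longrightarrow> (\<Sum>b<m. s b * U b c) = fid 0 c" "(\<Sum>b<m. s b) = 1"
  shows "(\<Sum>b<m. (U b a - Amat b a) * s b * (U b c - Amat b c)) = fid a c - Jdiag a c"
proof -
  have "(\<Sum>b<m. (U b a - Amat b a) * s b * (U b c - Amat b c))
    = (\<Sum>b<m. U b a * s b * U b c) - (\<Sum>b<m. (U b a - Amat b a) * s b * Amat b c)
      - (\<Sum>b<m. Amat b a * s b * (U b c - Amat b c)) - (\<Sum>b<m. Amat b a * s b * Amat b c)"
    by (simp add: sum_subtractf[symmetric] algebra_simps)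
  with assms gram_Amat[where m=m and s=s]
    gram_Amat_centered[where m=m and s=s and U=U and a=a and c=c]
    gram_centered_Amat[where m=m and s=s and U=U and a=a and c=c]
  show ?thesis by simp
qed

locale product_eigenbasis =
  fixes n :: nat and m :: "nat \<Rightarrow> nat" and P U \<Delta> :: "nat \<Rightarrow> fmat" and \<sigma> :: "nat \<Rightarrow> nat \<Rightarrow> real"
  assumes n: "n \<ge> 1"
    and stoch: "\<And>i. i \<in> {1..n} \<Longrightarrow> stochastic (m i) (P i)"
    and sigma: "\<And>i. i \<in> {1..n} \<Longrightarrow> pos_prob (m i) (\<sigma> i)"
    and unif: "\<And>i a. i \<in> {2..n} \<Longrightarrow> a < m i \<Longrightarrow> \<sigma> i a = 1 / real (m i)"
    and Delta_diag: "\<And>i a b. i \<in> {1..n} \<Longrightarrow> a < m i \<Longrightarrow> b < m i \<Longrightarrow> a \<noteq> b \<Longrightarrow> \<Delta> i a b = 0"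
    and eig: "\<And>i. i \<in> {1..n} \<Longrightarrow> feq (m i) (fmul (m i) (P i) (U i)) (fmul (m i) (U i) (\<Delta> i))"
    and orth: "\<And>i. i \<in> {1..n} \<Longrightarrow>
               feq (m i) (fmul (m i) (fmul (m i) (ftrans (U i)) (fdiag (\<sigma> i))) (U i)) fid"
    and col0: "\<And>i a. i \<in> {1..n} \<Longrightarrow> a < m i \<Longrightarrow> U i a 0 = 1"
    and Delta00: "\<And>i. i \<in> {1..n} \<Longrightarrow> \<Delta> i 0 0 = 1"
begin

definition U_term :: "nat \<Rightarrow> nat \<Rightarrow> fmat" where
  "U_term k j = (if j < k then Inorm (\<sigma> j)
                 else if j = k then (if k = 1 then U 1 else (\<lambda>a b. U k a b - Amat a b))
                 else Amat)"

definition P_term :: "nat \<Rightarrow> nat \<Rightarrow> fmat" where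
  "P_term i j = (if j < i then fid else if j = i then P i else Jmat (m j))"

definition Delta_term :: "nat \<Rightarrow> nat \<Rightarrow> fmat" where
  "Delta_term i j = (if j < i then fid else if j = i then \<Delta> i else Jdiag)"

definition eigenbasis :: pmat where
  "eigenbasis = (\<lambda>x y. \<Sum>k=1..n. kron n (U_term k) x y)"

definition partial_id :: "nat \<Rightarrow> pmat" where
  "partial_id N = kron n (\<lambda>j. if j \<le> N then fid else Jdiag)"

lemma dim_pos: "i \<in> {1..n} \<Longrightarrow> 0 < m i"
  using sigma[of i] by (cases "m i") (auto simp: pos_prob_def)

lemma sigma_pos: "i \<in> {1..n} \<Longrightarrow> a < m i \<Longrightarrow> 0 < \<sigma> i a"
  using sigma by (simp add: pos_prob_def)

lemma sigma_sum: "i \<in> {1..n} \<Longrightarrow> (\<Sum>a<m i. \<sigma> i a) = 1"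
  using sigma by (simp add: pos_prob_def)

lemma orthonormal: "i \<in> {1..n} \<Longrightarrow> a < m i \<Longrightarrow> c < m i \<Longrightarrow>
    (\<Sum>b<m i. U i b a * \<sigma> i b * U i b c) = fid a c"
  using orth by (simp add: feq_def gram_eq)

lemma weighted_column_sum: "i \<in> {1..n} \<Longrightarrow> c < m i \<Longrightarrow> (\<Sum>b<m i. \<sigma> i b * U i b c) = fid 0 c"
  using orthonormal[OF _ dim_pos] col0 by (simp add: mult.commute)

text \<open>This is where uniformity of \<open>\<sigma>\<^sub>i\<close> for \<open>i \<ge> 2\<close> enters.\<close>

lemma column_sum_zero:
  assumes i: "i \<in> {2..n}" and c: "c < m i" "c \<noteq> 0"
  shows "(\<Sum>b<m i. U i b c) = 0"
proof -
  have i1: "i \<in> {1..n}" using i by auto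
  have "(\<Sum>b<m i. U i b c) / real (m i) = (\<Sum>b<m i. \<sigma> i b * U i b c)"
    using unif[OF i] by (simp add: sum_divide_distrib)
  also have "\<dots> = 0" using weighted_column_sum[OF i1 c(1)] c(2) by (simp add: fid_def)
  finally show ?thesis using dim_pos[OF i1] by simp
qed

lemma eigenbasis_eq:
  "eigenbasis = (\<lambda>x y. kron n (\<lambda>j. if j = 1 then U 1 else Amat) x y
      + (\<Sum>k=2..n. kron n (\<lambda>j. if j < k then Inorm (\<sigma> j)
                               else if j = k then (\<lambda>a b. U k a b - Amat a b) else Amat) x y))"
  (is "_ = ?rhs")
proof (intro ext)
  fix x y
  have "kron n (U_term 1) x y = kron n (\<lambda>j. if j = 1 then U 1 else Amat) x y"
    by (rule kron_cong) (auto simp: U_term_def)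
  moreover have "(\<Sum>k=2..n. kron n (U_term k) x y) = (\<Sum>k=2..n. kron n (\<lambda>j. if j < k then Inorm (\<sigma> j)
      else if j = k then (\<lambda>a b. U k a b - Amat a b) else Amat) x y)"
    by (intro sum.cong kron_cong) (auto simp: U_term_def)
  ultimately show "eigenbasis x y = ?rhs x y"
    unfolding eigenbasis_def sum.atLeast_Suc_atMost[OF n] by (simp add: numeral_2_eq_2)
qed

lemma P_term_U_term_eq_zero:
  assumes "i < k" "i \<in> {1..n}" "k \<in> {1..n}" "x \<in> pspace n m" "z \<in> pspace n m"
  shows "kron n (\<lambda>j. fmul (m j) (P_term i j) (U_term k j)) x z = 0"
    and "kron n (\<lambda>j. fmul (m j) (U_term k j) (Delta_term i j)) x z = 0"
proof -
  have k2: "k \<in> {2..n}" "k \<noteq> 1" using assms by auto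
  have xz: "x k < m k" "z k < m k" using assms pspace_lessD by auto
  show "kron n (\<lambda>j. fmul (m j) (P_term i j) (U_term k j)) x z = 0"
    using assms k2 xz col0 column_sum_zero
    by (intro kron_eq_0[of k]) (auto simp: P_term_def U_term_def intro!: fmul_Jmat_centered)
  show "kron n (\<lambda>j. fmul (m j) (U_term k j) (Delta_term i j)) x z = 0"
    using assms k2 xz
    by (intro kron_eq_0[of k])
       (auto simp: U_term_def Delta_term_def intro!: fmul_centered_Jdiag dim_pos col0)
qed

lemma P_term_U_term_factor_commute:
  assumes "k \<le> i" "j \<in> {1..n}" "a < m j" "c < m j"
  shows "fmul (m j) (P_term i j) (U_term k j) a c = fmul (m j) (U_term k j) (Delta_term i j) a c"
proof -
  have PA: "fmul (m j) (P j) Amat a c = Amat a c"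
    using stochastic_fmul_Amat[OF stoch] assms by blast
  have AD: "fmul (m j) Amat (\<Delta> j) a c = Amat a c"
    using assms dim_pos Delta00 Delta_diag by (intro fmul_Amat_left) auto
  have PU: "fmul (m j) (P j) (U j) a c = fmul (m j) (U j) (\<Delta> j) a c"
    using eig assms by (simp add: feq_def)
  consider "j < k" | "j = k" | "k < j" "j < i" | "k < j" "j = i" | "i < j"
    using assms(1) by linarith
  then show ?thesis
  proof cases
    case 2
    then show ?thesis using assms PU PA AD
      by (cases "k = 1")
         (auto simp: P_term_def U_term_def Delta_term_def fmul_diff_left fmul_diff_right
                     fmul_fid_left fmul_fid_right)
  next
    case 5
    then show ?thesis using assms fmul_Jmat_Amat fmul_Amat_Jdiag dim_pos
      by (simp add: P_term_def U_term_def Delta_term_def)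
  qed (use assms PA AD in \<open>auto simp: P_term_def U_term_def Delta_term_def fmul_fid_left fmul_fid_right\<close>)
qed

lemma P_term_U_term_commute:
  assumes "i \<in> {1..n}" "k \<in> {1..n}" "x \<in> pspace n m" "z \<in> pspace n m"
  shows "kron n (\<lambda>j. fmul (m j) (P_term i j) (U_term k j)) x z
       = kron n (\<lambda>j. fmul (m j) (U_term k j) (Delta_term i j)) x z"
proof (cases "i < k")
  case True
  then show ?thesis using P_term_U_term_eq_zero assms by simp
next
  case False
  then show ?thesis using assms
    by (intro kron_cong_feq) (auto simp: feq_def P_term_U_term_factor_commute)
qed

theorem eigenbasis_eigen:
  "peq n m (pmul n m (\<lambda>x y. \<Sum>i=1..n. p i * kron n (P_term i) x y) eigenbasis)
           (pmul n m eigenbasis (\<lambda>x y. \<Sum>i=1..n. p i * kron n (Delta_term i) x y))"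
  unfolding peq_def
proof (intro ballI)
  fix x z assume x: "x \<in> pspace n m" and z: "z \<in> pspace n m"
  have "pmul n m (\<lambda>x y. \<Sum>i=1..n. p i * kron n (P_term i) x y) eigenbasis x z
      = (\<Sum>i=1..n. \<Sum>k=1..n. p i * kron n (\<lambda>j. fmul (m j) (P_term i j) (U_term k j)) x z)"
    unfolding eigenbasis_def
    by (simp add: pmul_sum_left pmul_sum_right pmul_scale_left pmul_kron sum_distrib_left)
  also have "\<dots> = (\<Sum>i=1..n. \<Sum>k=1..n. p i * kron n (\<lambda>j. fmul (m j) (U_term k j) (Delta_term i j)) x z)"
    using P_term_U_term_commute x z by (intro sum.cong refl) auto
  also have "\<dots> = (\<Sum>k=1..n. \<Sum>i=1..n. p i * kron n (\<lambda>j. fmul (m j) (U_term k j) (Delta_term i j)) x z)"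
    by (rule sum.swap)
  also have "\<dots> = pmul n m eigenbasis (\<lambda>x y. \<Sum>i=1..n. p i * kron n (Delta_term i) x y) x z"
    unfolding eigenbasis_def
    by (simp add: pmul_sum_left pmul_sum_right pmul_scale_right pmul_kron sum_distrib_left)
  finally show "pmul n m (\<lambda>x y. \<Sum>i=1..n. p i * kron n (P_term i) x y) eigenbasis x z
      = pmul n m eigenbasis (\<lambda>x y. \<Sum>i=1..n. p i * kron n (Delta_term i) x y) x z" .
qed

abbreviation gram_term :: "nat \<Rightarrow> nat \<Rightarrow> pmat" where
  "gram_term k l \<equiv> kron n (\<lambda>j. fmul (m j) (fmul (m j) (ftrans (U_term k j)) (fdiag (\<sigma> j))) (U_term l j))"

lemma gram_term_offdiag:
  assumes "k \<in> {1..n}" "l \<in> {1..n}" "k \<noteq> l" "x \<in> pspace n m" "z \<in> pspace n m"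
  shows "gram_term k l x z = 0"
proof (cases "k < l")
  case True
  with assms have "l \<in> {2..n}" "z l < m l" by (auto simp: pspace_lessD)
  with True assms show ?thesis
    by (intro kron_eq_0[of l])
       (auto simp: gram_eq U_term_def intro!: gram_Amat_centered weighted_column_sum sigma_sum)
next
  case False
  with assms have "l < k" "k \<in> {2..n}" "x k < m k" by (auto simp: pspace_lessD)
  with assms show ?thesis
    by (intro kron_eq_0[of k])
       (auto simp: gram_eq U_term_def intro!: gram_centered_Amat weighted_column_sum sigma_sum)
qed

lemma gram_term_row_sum:
  assumes "k \<in> {1..n}" "x \<in> pspace n m" "z \<in> pspace n m"
  shows "(\<Sum>l=1..n. gram_term k l x z) = gram_term k k x z"
proof -
  have "(\<Sum>l=1..n. gram_term k l x z) = (\<Sum>l=1..n. if l = k then gram_term k k x z else 0)"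
    using assms gram_term_offdiag by (intro sum.cong) auto
  with assms(1) show ?thesis by simp
qed

lemma gram_term_diag_factor:
  assumes "k \<in> {1..n}" "j \<in> {1..n}" "a < m j" "c < m j"
  shows "(\<Sum>b<m j. U_term k j b a * \<sigma> j b * U_term k j b c)
       = (if j < k then fid a c else if j = k then (if k = 1 then fid a c else fid a c - Jdiag a c)
          else Jdiag a c)"
  using assms
  by (auto simp: U_term_def gram_Inorm sigma_pos orthonormal gram_Amat sigma_sum
           intro!: gram_centered orthonormal weighted_column_sum)

lemma gram_term_diag:
  assumes "k \<in> {1..n}" "x \<in> pspace n m" "z \<in> pspace n m"
  shows "gram_term k k x z = (if k = 1 then partial_id 1 x z else partial_id k x z - partial_id (k - 1) x z)"
proof -
  define F where "F = (\<lambda>j::nat. if j < k then fid else Jdiag)"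
  define H where "H = F(k := (if k = 1 then fid else (\<lambda>a b. fid a b - Jdiag a b)))"
  have "gram_term k k x z = kron n H x z"
    using assms by (intro kron_cong_feq)
      (auto simp: feq_def gram_eq gram_term_diag_factor H_def F_def)
  also have "\<dots> = (if k = 1 then partial_id 1 x z else partial_id k x z - partial_id (k - 1) x z)"
  proof (cases "k = 1")
    case False
    then have "kron n H x z = kron n (F(k := fid)) x z - kron n (F(k := Jdiag)) x z"
      using kron_fun_upd_diff[OF assms(1)] by (simp add: H_def)
    moreover have "kron n (F(k := fid)) x z = partial_id k x z"
      "kron n (F(k := Jdiag)) x z = partial_id (k - 1) x z"
      unfolding partial_id_def by (auto simp: F_def intro!: kron_cong)
    ultimately show ?thesis using False by simp
  qed (auto simp: H_def F_def partial_id_def intro!: kron_cong)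
  finally show ?thesis .
qed

lemma gram_term_diag_telescope:
  assumes "N \<in> {1..n}" "x \<in> pspace n m" "z \<in> pspace n m"
  shows "(\<Sum>k=1..N. gram_term k k x z) = partial_id N x z"
  using assms
proof (induction N)
  case (Suc N)
  then show ?case using gram_term_diag[of "Suc N" x z] by (cases "N = 0") auto
qed simp

theorem eigenbasis_orthonormal:
  "peq n m (pmul n m (pmul n m (ptrans eigenbasis) (kron n (\<lambda>j. fdiag (\<sigma> j)))) eigenbasis) pid"
  unfolding peq_def
proof (intro ballI)
  fix x z assume x: "x \<in> pspace n m" and z: "z \<in> pspace n m"
  have transpose: "ptrans eigenbasis = (\<lambda>x y. \<Sum>k=1..n. kron n (\<lambda>j. ftrans (U_term k j)) x y)"
    unfolding eigenbasis_def by (auto simp: ptrans_def kron_def ftrans_def intro!: ext)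
  have "pmul n m (pmul n m (ptrans eigenbasis) (kron n (\<lambda>j. fdiag (\<sigma> j)))) eigenbasis x z
      = (\<Sum>k=1..n. \<Sum>l=1..n. gram_term k l x z)"
    unfolding transpose unfolding eigenbasis_def
    by (simp add: pmul_sum_left pmul_sum_right pmul_kron)
  also have "\<dots> = (\<Sum>k=1..n. gram_term k k x z)"
    using x z gram_term_row_sum by simp
  also have "\<dots> = partial_id n x z"
    using gram_term_diag_telescope n x z by simp
  also have "\<dots> = kron n (\<lambda>_. fid) x z"
    unfolding partial_id_def by (rule kron_cong) simp
  also have "\<dots> = pid x z"
    by (rule kron_diag_eq_pid[OF x z])
  finally show "pmul n m (pmul n m (ptrans eigenbasis) (kron n (\<lambda>j. fdiag (\<sigma> j)))) eigenbasis x z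
      = pid x z" .
qed

end

theorem corollary6p2:
  fixes n :: nat and m :: "nat \<Rightarrow> nat"
    and P U \<Delta> :: "nat \<Rightarrow> fmat" and \<sigma> :: "nat \<Rightarrow> nat \<Rightarrow> real" and p0 :: "nat \<Rightarrow> real"
  assumes n: "n \<ge> 1"
    and stoch: "\<And>i. i \<in> {1..n} \<Longrightarrow> stochastic (m i) (P i)"
    and irr: "\<And>i. i \<in> {1..n} \<Longrightarrow> irreducible_mat (m i) (P i)"
    and sigma: "\<And>i. i \<in> {1..n} \<Longrightarrow> pos_prob (m i) (\<sigma> i)"
    and db: "\<And>i. i \<in> {1..n} \<Longrightarrow> detailed_balance (m i) (P i) (\<sigma> i)"
    and unif: "\<And>i a. i \<in> {2..n} \<Longrightarrow> a < m i \<Longrightarrow> \<sigma> i a = 1 / real (m i)"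
    and p0pos: "\<And>i. i \<in> {1..n} \<Longrightarrow> p0 i > 0"
    and p0sum: "(\<Sum>i=1..n. p0 i) = 1"
    and Delta_diag: "\<And>i a b. i \<in> {1..n} \<Longrightarrow> a < m i \<Longrightarrow> b < m i \<Longrightarrow> a \<noteq> b \<Longrightarrow> \<Delta> i a b = 0"
    and eig: "\<And>i. i \<in> {1..n} \<Longrightarrow>
               feq (m i) (fmul (m i) (P i) (U i)) (fmul (m i) (U i) (\<Delta> i))"
    and orth: "\<And>i. i \<in> {1..n} \<Longrightarrow>
               feq (m i) (fmul (m i) (fmul (m i) (ftrans (U i)) (fdiag (\<sigma> i))) (U i)) fid"
    and col0: "\<And>i a. i \<in> {1..n} \<Longrightarrow> a < m i \<Longrightarrow> U i a 0 = 1"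
    and Delta00: "\<And>i. i \<in> {1..n} \<Longrightarrow> \<Delta> i 0 0 = 1"
  defines "PP \<equiv> (\<lambda>x y. \<Sum>i=1..n. p0 i *
              kron n (\<lambda>j. if j < i then fid else if j = i then P i else Jmat (m j)) x y)"
    and "UU \<equiv> (\<lambda>x y. kron n (\<lambda>j. if j = 1 then U 1 else Amat) x y
              + (\<Sum>k=2..n. kron n (\<lambda>j. if j < k then Inorm (\<sigma> j)
                                       else if j = k then (\<lambda>a b. U k a b - Amat a b)
                                       else Amat) x y))"
    and "DD \<equiv> kron n (\<lambda>j. fdiag (\<sigma> j))"
    and "DL \<equiv> (\<lambda>x y. \<Sum>i=1..n. p0 i *
              kron n (\<lambda>j. if j < i then fid else if j = i then \<Delta> i else Jdiag) x y)"
  shows "peq n m (pmul n m PP UU) (pmul n m UU DL)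
       \<and> peq n m (pmul n m (pmul n m (ptrans UU) DD) UU) pid"
proof -
  interpret product_eigenbasis n m P U \<Delta> \<sigma>
    using n stoch sigma unif Delta_diag eig orth col0 Delta00 by unfold_locales
  have "UU = eigenbasis" unfolding UU_def eigenbasis_eq ..
  moreover have "PP = (\<lambda>x y. \<Sum>i=1..n. p0 i * kron n (P_term i) x y)"
    unfolding PP_def P_term_def ..
  moreover have "DL = (\<lambda>x y. \<Sum>i=1..n. p0 i * kron n (Delta_term i) x y)"
    unfolding DL_def Delta_term_def ..
  ultimately show ?thesis
    using eigenbasis_eigen eigenbasis_orthonormal unfolding DD_def by simp
qed

end
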